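(* For all integers $n\ge 2$ and $1\le k<n$, the vertex covering number of $G=H_B(n,k)$ is $\beta(G)=\binom{n}{k}$.
   Context: Fix integers $n\ge 2$ and $1\le k<n$ and positive real numbers $x_1<x_2<\dots<x_n$. Let $\mathscr{B}_n=\{\pm x_1,\pm x_2,\dots,\pm x_{n-1},x_n\}$ (so $-x_n\notin\mathscr{B}_n$). Let $\phi(\mathscr{B}_n)$ be the family of all nonempty subsets $S\subseteq\mathscr{B}_n$ whose elements have pairwise distinct absolute values and whose element of largest absolute value is positive. Let $\mathscr{B}_n^+=\{x_1,\dots,x_n\}$, let $V_1$ be the set of all $k$-element subsets of $\mathscr{B}_n^+$, and let $V_2=\phi(\mathscr{B}_n)\setminus V_1$. For $A\in\phi(\mathscr{B}_n)$ put $A^\dagger=\{|a|:a\in A\}$. The bipartite Kneser B type-$k$ graph $H_B(n,k)$ is the simple graph with vertex set $V_1\cup V_2$ in which $X\in V_1$ and $Y\in V_2$ are adjacent if and only if $X\subseteq Y^\dagger$ or $Y^\dagger\subseteq X$, and there are no other edges. The vertex covering number is the minimum size of a set of vertices meeting every edge. *)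

theory Defs
  imports Complex_Main
begin

definition B_set :: "(nat \<Rightarrow> real) \<Rightarrow> nat \<Rightarrow> real set" where
  "B_set x n = {x i | i. 1 \<le> i \<and> i \<le> n} \<union> {- x i | i. 1 \<le> i \<and> i < n}"

definition B_plus :: "(nat \<Rightarrow> real) \<Rightarrow> nat \<Rightarrow> real set" where
  "B_plus x n = {x i | i. 1 \<le> i \<and> i \<le> n}"

definition phi_B :: "(nat \<Rightarrow> real) \<Rightarrow> nat \<Rightarrow> real set set" where
  "phi_B x n = {S. S \<subseteq> B_set x n \<and> S \<noteq> {} \<and> inj_on abs S \<and>
      (\<forall>a\<in>S. (\<forall>b\<in>S. \<bar>b\<bar> \<le> \<bar>a\<bar>) \<longrightarrow> a > 0)}"

definition V1 :: "(nat \<Rightarrow> real) \<Rightarrow> nat \<Rightarrow> nat \<Rightarrow> real set set" where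
  "V1 x n k = {X. X \<subseteq> B_plus x n \<and> card X = k}"

definition V2 :: "(nat \<Rightarrow> real) \<Rightarrow> nat \<Rightarrow> nat \<Rightarrow> real set set" where
  "V2 x n k = phi_B x n - V1 x n k"

definition dagger :: "real set \<Rightarrow> real set" where
  "dagger A = abs ` A"

definition HB_vertices :: "(nat \<Rightarrow> real) \<Rightarrow> nat \<Rightarrow> nat \<Rightarrow> real set set" where
  "HB_vertices x n k = V1 x n k \<union> V2 x n k"

definition HB_edge :: "(nat \<Rightarrow> real) \<Rightarrow> nat \<Rightarrow> nat \<Rightarrow> real set \<Rightarrow> real set \<Rightarrow> bool" where
  "HB_edge x n k U W \<longleftrightarrow>
     (U \<in> V1 x n k \<and> W \<in> V2 x n k \<and> (U \<subseteq> dagger W \<or> dagger W \<subseteq> U)) \<or>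
     (W \<in> V1 x n k \<and> U \<in> V2 x n k \<and> (W \<subseteq> dagger U \<or> dagger U \<subseteq> W))"

definition is_vertex_cover :: "'a set \<Rightarrow> ('a \<Rightarrow> 'a \<Rightarrow> bool) \<Rightarrow> 'a set \<Rightarrow> bool" where
  "is_vertex_cover V E C \<longleftrightarrow> C \<subseteq> V \<and> (\<forall>u\<in>V. \<forall>v\<in>V. E u v \<longrightarrow> u \<in> C \<or> v \<in> C)"

definition vertex_cover_number :: "'a set \<Rightarrow> ('a \<Rightarrow> 'a \<Rightarrow> bool) \<Rightarrow> nat" where
  "vertex_cover_number V E = Min {card C | C. is_vertex_cover V E C}"

end

theory Submission
  imports Defs
begin

text \<open>The k-subsets of positive elements form a vertex cover, since every edge joins V1 to V2.
  Conversely every k-subset X is matched to a vertex of V2 whose absolute values contain X: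
  for k \<ge> 2 negate the smallest element of X, for k = 1 adjoin a second element. The matching
  is injective, so any vertex cover contains, for each X, either X or its partner, and hence
  has at least as many elements as V1.\<close>

lemma card_le_vertex_cover_if_matching:
  assumes cover: "is_vertex_cover V E C" and "finite V"
    and "A \<subseteq> V" and inj: "inj_on f A" and partners: "f ` A \<subseteq> V - A"
    and edges: "\<And>X. X \<in> A \<Longrightarrow> E X (f X)"
  shows "card A \<le> card C"
proof -
  define g where "g X = (if X \<in> C then X else f X)" for X
  have "finite C" using cover \<open>finite V\<close> by (meson is_vertex_cover_def finite_subset)
  moreover have "g ` A \<subseteq> C"
  proof
    fix Y assume "Y \<in> g ` A"
    then obtain X where "X \<in> A" "Y = g X" by blast
    moreover have "X \<in> C \<or> f X \<in> C"
      using cover edges[OF \<open>X \<in> A\<close>] \<open>A \<subseteq> V\<close> partners \<open>X \<in> A\<close>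
      unfolding is_vertex_cover_def by blast
    ultimately show "Y \<in> C" by (auto simp: g_def)
  qed
  moreover have "inj_on g A"
  proof (rule inj_onI)
    fix X Y assume "X \<in> A" "Y \<in> A" "g X = g Y"
    then show "X = Y"
      using inj partners by (auto simp: g_def inj_on_def split: if_splits)
  qed
  ultimately show ?thesis by (meson card_inj_on_le)
qed

lemma vertex_cover_number_eq_card_if_matching:
  assumes "finite V" and cover: "is_vertex_cover V E A"
    and "inj_on f A" and "f ` A \<subseteq> V - A" and "\<And>X. X \<in> A \<Longrightarrow> E X (f X)"
  shows "vertex_cover_number V E = card A"
proof -
  have "A \<subseteq> V" using cover by (simp add: is_vertex_cover_def)
  have "{card C | C. is_vertex_cover V E C} \<subseteq> card ` Pow V"
    by (auto simp: is_vertex_cover_def)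
  then have "finite {card C | C. is_vertex_cover V E C}"
    using \<open>finite V\<close> by (simp add: finite_subset)
  then show ?thesis
    unfolding vertex_cover_number_def
    using cover card_le_vertex_cover_if_matching[of V E _ A f] \<open>A \<subseteq> V\<close> assms
    by (intro Min_eqI) auto
qed

lemma Min_less_Max:
  fixes X :: "'a::linorder set"
  assumes "finite X" and "2 \<le> card X"
  shows "Min X < Max X"
proof -
  have "X \<noteq> {}" using assms(2) by auto
  then have "card (X - {Min X}) \<noteq> 0" using assms by simp
  then have "X - {Min X} \<noteq> {}" by (metis card.empty)
  then obtain b where "b \<in> X" "b \<noteq> Min X" by blast
  moreover have "Min X \<le> b" "b \<le> Max X" using assms(1) \<open>b \<in> X\<close> by simp_all
  ultimately show ?thesis by simp
qed

definition flip_min :: "'a::linordered_ab_group_add set \<Rightarrow> 'a set" where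
  "flip_min X = insert (- Min X) (X - {Min X})"

context
  fixes X :: "'a::linordered_idom set"
  assumes fin: "finite X" and pos: "\<forall>a\<in>X. 0 < a" and two_le_card: "2 \<le> card X"
begin

private lemma Min_mem: "Min X \<in> X"
  using fin two_le_card by (auto intro: Min_in)

private lemma Min_pos: "0 < Min X"
  using pos Min_mem by blast

lemma abs_flip_min: "abs ` flip_min X = X"
  using pos Min_mem by (force simp: flip_min_def abs_of_pos image_iff)

lemma inj_on_abs_flip_min: "inj_on abs (flip_min X)"
proof -
  have "- Min X \<notin> X" using pos Min_pos by (meson neg_less_0_iff_less order.asym)
  then have "- Min X \<notin> X - {Min X}" by blast
  then have "card (flip_min X) = card X"
    using fin Min_mem two_le_card by (simp add: flip_min_def)
  then show ?thesis using abs_flip_min fin by (intro eq_card_imp_inj_on) (auto simp: flip_min_def)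
qed

lemma flip_min_max_abs_pos:
  assumes "a \<in> flip_min X" and "\<forall>b\<in>flip_min X. \<bar>b\<bar> \<le> \<bar>a\<bar>"
  shows "0 < a"
proof -
  have "X \<noteq> {}" using two_le_card by auto
  then have "Max X \<in> flip_min X"
    using Min_less_Max[OF fin two_le_card] fin by (auto simp: flip_min_def)
  moreover have "\<bar>- Min X\<bar> < \<bar>Max X\<bar>" using Min_pos Min_less_Max[OF fin two_le_card] by simp
  ultimately have "a \<noteq> - Min X" using assms(2) by fastforce
  then show ?thesis using assms(1) pos by (auto simp: flip_min_def)
qed

end

locale kneser_B_graph =
  fixes x :: "nat \<Rightarrow> real" and n k :: nat
  assumes two_le_n: "2 \<le> n" and one_le_k: "1 \<le> k"
    and x_1_pos: "0 < x 1"
    and x_strict_mono: "\<And>i j. 1 \<le> i \<Longrightarrow> i < j \<Longrightarrow> j \<le> n \<Longrightarrow> x i < x j"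
begin

lemma image_x_pos: "a \<in> x ` {1..n} \<Longrightarrow> 0 < a"
  using x_1_pos x_strict_mono[of 1] by (fastforce simp: le_less)

lemma image_x_le_x_n: "a \<in> x ` {1..n} \<Longrightarrow> a \<le> x n"
  using x_strict_mono[of _ n] by (auto simp: le_less)

lemma inj_on_x: "inj_on x {1..n}"
  by (rule strict_mono_on_imp_inj_on, rule strict_mono_onI) (simp add: x_strict_mono)

lemma B_plus_eq: "B_plus x n = x ` {1..n}"
  by (auto simp: B_plus_def)

lemma B_set_eq: "B_set x n = x ` {1..n} \<union> uminus ` x ` {1..<n}"
  by (auto simp: B_set_def)

lemma V1_iff: "X \<in> V1 x n k \<longleftrightarrow> X \<subseteq> x ` {1..n} \<and> card X = k"
  by (simp add: V1_def B_plus_eq)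

lemma card_V1: "card (V1 x n k) = n choose k"
proof -
  have "card (x ` {1..n}) = n" using inj_on_x by (simp add: card_image)
  then show ?thesis using n_subsets[of "x ` {1..n}" k] by (simp add: V1_def B_plus_eq)
qed

lemma finite_HB_vertices: "finite (HB_vertices x n k)"
proof -
  have "HB_vertices x n k \<subseteq> Pow (B_set x n)"
    by (auto simp: HB_vertices_def V2_def phi_B_def V1_iff B_set_eq)
  moreover have "finite (B_set x n)" by (simp add: B_set_eq)
  ultimately show ?thesis by (meson finite_Pow_iff finite_subset)
qed

lemma V1_vertex_cover: "is_vertex_cover (HB_vertices x n k) (HB_edge x n k) (V1 x n k)"
  by (auto simp: is_vertex_cover_def HB_vertices_def HB_edge_def)

text \<open>For k = 1 the partner of the top singleton borrows x 1, which differs from x n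
  because n \<ge> 2.\<close>
definition partner :: "real set \<Rightarrow> real set" where
  "partner X = (if 2 \<le> k then flip_min X
     else if X = {x n} then {x 1, x n} else {x n, - the_elem X})"

lemma flip_min_hyps_of_V1:
  assumes "2 \<le> k" and "X \<in> V1 x n k"
  shows "finite X" and "\<forall>a\<in>X. 0 < a" and "2 \<le> card X"
  using assms finite_subset[of X "x ` {1..n}"] image_x_pos by (auto simp: V1_iff)

lemma flip_min_in_V2:
  assumes "2 \<le> k" and "X \<in> V1 x n k"
  shows "flip_min X \<in> V2 x n k"
proof -
  note X = flip_min_hyps_of_V1[OF assms]
  have X_sub: "X \<subseteq> x ` {1..n}" using assms(2) by (simp add: V1_iff)
  have "Min X \<in> X" using X by (auto intro: Min_in)
  then obtain i where i: "i \<in> {1..n}" "Min X = x i" using X_sub by blast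
  have "X \<noteq> {}" using X(3) by auto
  then have "Max X \<le> x n" using X(1) X_sub image_x_le_x_n by auto
  then have "i \<noteq> n" using Min_less_Max[OF X(1,3)] i by auto
  then have "- Min X \<in> uminus ` x ` {1..<n}" using i by auto
  then have "flip_min X \<subseteq> B_set x n" using X_sub by (auto simp: flip_min_def B_set_eq)
  moreover have "flip_min X \<notin> V1 x n k"
    using X(2) \<open>Min X \<in> X\<close> image_x_pos by (force simp: flip_min_def V1_iff)
  ultimately show ?thesis
    using inj_on_abs_flip_min[OF X] flip_min_max_abs_pos[OF X]
    by (auto simp: V2_def phi_B_def flip_min_def)
qed

lemma V1_singleton_cases:
  assumes "k < 2" and "X \<in> V1 x n k"
  obtains a where "X = {a}" and "a \<in> x ` {1..n}"
proof -
  have "card X = 1" using assms one_le_k by (simp add: V1_iff)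
  then show thesis using that assms(2) by (auto simp: V1_iff card_1_singleton_iff)
qed

lemma partner_singleton:
  "k < 2 \<Longrightarrow> partner {a} = (if a = x n then {x 1, x n} else {x n, - a})"
  by (simp add: partner_def)

lemma singleton_partner_in_V2:
  assumes "k < 2" and "a \<in> x ` {1..n}"
  shows "partner {a} \<in> V2 x n k"
proof (cases "a = x n")
  case True
  have "x 1 < x n" using x_strict_mono[of 1 n] two_le_n by simp
  moreover have "{x 1, x n} \<subseteq> B_set x n" using two_le_n by (auto simp: B_set_eq)
  ultimately show ?thesis
    using True assms(1) one_le_k x_1_pos
    by (auto simp: partner_singleton V2_def phi_B_def V1_iff)
next
  case False
  then obtain i where i: "1 \<le> i" "i < n" "a = x i" using assms(2) by fastforce
  have "0 < a" "a < x n" using assms(2) i image_x_pos x_strict_mono[of i n] by auto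
  moreover have "{x n, - a} \<subseteq> B_set x n" using i two_le_n by (auto simp: B_set_eq)
  ultimately show ?thesis
    using False assms(1) image_x_pos by (force simp: partner_singleton V2_def phi_B_def V1_iff)
qed

lemma partner_in_V2:
  assumes "X \<in> V1 x n k"
  shows "partner X \<in> V2 x n k"
proof (cases "2 \<le> k")
  case True
  then show ?thesis using flip_min_in_V2 assms by (simp add: partner_def)
next
  case False
  then have "k < 2" by simp
  then obtain a where "X = {a}" "a \<in> x ` {1..n}" using assms by (rule V1_singleton_cases)
  then show ?thesis using singleton_partner_in_V2 \<open>k < 2\<close> by simp
qed

lemma subset_dagger_partner:
  assumes "X \<in> V1 x n k"
  shows "X \<subseteq> dagger (partner X)"
proof (cases "2 \<le> k")
  case True
  then show ?thesis
    using abs_flip_min[OF flip_min_hyps_of_V1[OF True assms]] by (simp add: partner_def dagger_def)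
next
  case False
  then have "k < 2" by simp
  then obtain a where "X = {a}" "a \<in> x ` {1..n}" using assms by (rule V1_singleton_cases)
  moreover have "0 < a" "0 < x 1" using \<open>a \<in> x ` {1..n}\<close> image_x_pos x_1_pos by auto
  ultimately show ?thesis using \<open>k < 2\<close> by (auto simp: partner_singleton dagger_def)
qed

lemma inj_on_partner: "inj_on partner (V1 x n k)"
proof (cases "2 \<le> k")
  case True
  show ?thesis
  proof (rule inj_on_inverseI)
    show "abs ` partner X = X" if "X \<in> V1 x n k" for X
      using abs_flip_min[OF flip_min_hyps_of_V1[OF True that]] True by (simp add: partner_def)
  qed
next
  case False
  then have "k < 2" by simp
  show ?thesis
  proof (rule inj_onI)
    fix X Y assume "X \<in> V1 x n k" "Y \<in> V1 x n k" and eq: "partner X = partner Y"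
    obtain a b where "X = {a}" "Y = {b}" "a \<in> x ` {1..n}" "b \<in> x ` {1..n}"
      using V1_singleton_cases[OF \<open>k < 2\<close>] \<open>X \<in> V1 x n k\<close> \<open>Y \<in> V1 x n k\<close> by metis
    moreover have "0 < a" "0 < b" using \<open>a \<in> _\<close> \<open>b \<in> _\<close> image_x_pos by auto
    ultimately show "X = Y" using eq \<open>k < 2\<close> x_1_pos
      by (auto simp: partner_singleton doubleton_eq_iff split: if_splits)
  qed
qed

end

theorem mainTheorem3:
  fixes x :: "nat \<Rightarrow> real" and n k :: nat
  assumes "n \<ge> 2" and "1 \<le> k" and "k < n"
    and "0 < x 1"
    and "\<And>i j. 1 \<le> i \<Longrightarrow> i < j \<Longrightarrow> j \<le> n \<Longrightarrow> x i < x j"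
  shows "vertex_cover_number (HB_vertices x n k) (HB_edge x n k) = n choose k"
proof -
  interpret kneser_B_graph x n k
    using assms by unfold_locales
  have "vertex_cover_number (HB_vertices x n k) (HB_edge x n k) = card (V1 x n k)"
  proof (rule vertex_cover_number_eq_card_if_matching
      [OF finite_HB_vertices V1_vertex_cover inj_on_partner])
    show "partner ` V1 x n k \<subseteq> HB_vertices x n k - V1 x n k"
      using partner_in_V2 by (auto simp: HB_vertices_def V2_def)
    show "HB_edge x n k X (partner X)" if "X \<in> V1 x n k" for X
      using that partner_in_V2 subset_dagger_partner by (simp add: HB_edge_def)
  qed
  then show ?thesis by (simp add: card_V1)
qed

end
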